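(* Let $n_t \geq 1$ be an integer and let $M \geq 2$ be an integer such that $\log_2 M$ is a positive integer. For an integer $n_{rf}$ with $1 \leq n_{rf} \leq n_t$, define \[ R_{\mathrm{gsim}}(n_{rf}) = \left\lfloor \log_2 \binom{n_t}{n_{rf}} \right\rfloor + n_{rf}\log_2 M, \] and let $R^{\max}_{\mathrm{gsim}} = \max_{1\leq n_{rf}\leq n_t} R_{\mathrm{gsim}}(n_{rf})$. Then $R^{\max}_{\mathrm{gsim}} > n_t \log_2 M$ if and only if $n_t \geq 2M$.
   Context: This is the achievable rate (bits per channel use) of generalized spatial index modulation: the transmitter has $n_t$ transmit antennas and $n_{rf}$ transmit RF chains, and in each channel use it activates $n_{rf}$ of the $n_t$ antennas, chosen from a fixed set of $2^{\lfloor \log_2 \binom{n_t}{n_{rf}}\rfloor}$ activation patterns. Each active antenna sends a symbol from an $M$-ary modulation alphabet (e.g. $M$-QAM). The value $n_t\log_2 M$ is the rate of spatial multiplexing, i.e. the case $n_{rf}=n_t$. *)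

theory Defs
  imports Complex_Main
begin

definition R_gsim :: "nat \<Rightarrow> nat \<Rightarrow> nat \<Rightarrow> real" where
  "R_gsim nt M nrf = real_of_int \<lfloor>log 2 (real (nt choose nrf))\<rfloor> + real nrf * log 2 (real M)"

definition R_gsim_max :: "nat \<Rightarrow> nat \<Rightarrow> real" where
  "R_gsim_max nt M = Max ((\<lambda>nrf. R_gsim nt M nrf) ` {1..nt})"

end

theory Submission
  imports Defs
begin

text \<open>With \<open>M = 2^k\<close>, using \<open>n\<^sub>r\<^sub>f\<close> chains beats spatial multiplexing iff
  \<open>2 M^(n\<^sub>t-n\<^sub>r\<^sub>f) \<le> C(n\<^sub>t, n\<^sub>r\<^sub>f)\<close>. For \<open>n\<^sub>r\<^sub>f = n\<^sub>t - 1\<close> this reads \<open>2M \<le> n\<^sub>t\<close>.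
  Conversely, if \<open>n\<^sub>t < 2M\<close> then \<open>C(n\<^sub>t, m) < 2M^m\<close> for every \<open>m \<ge> 1\<close>, by induction on \<open>m\<close>
  using \<open>C(n\<^sub>t, m+1) (m+1) = C(n\<^sub>t, m) (n\<^sub>t - m)\<close> and \<open>n\<^sub>t - m < 2M \<le> (m+1) M\<close>.\<close>

lemma less_floor_log_iff:
  fixes b x :: real and d :: nat
  assumes "1 < b" and "0 < x"
  shows "int d < \<lfloor>log b x\<rfloor> \<longleftrightarrow> b ^ Suc d \<le> x"
proof -
  have "int d < \<lfloor>log b x\<rfloor> \<longleftrightarrow> int (Suc d) \<le> \<lfloor>log b x\<rfloor>"
    by linarith
  also have "\<dots> \<longleftrightarrow> real (Suc d) \<le> log b x"
    by (metis le_floor_iff of_int_of_nat_eq)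
  also have "\<dots> \<longleftrightarrow> b powr real (Suc d) \<le> x"
    using assms by (simp add: le_log_iff del: of_nat_Suc)
  finally show ?thesis
    using assms(1) by (simp add: powr_realpow del: of_nat_Suc)
qed

lemma binomial_less_double_power:
  fixes n M :: nat
  assumes "n < 2 * M" and "0 < m"
  shows "n choose m < 2 * M ^ m"
proof -
  have "n choose Suc j < 2 * M ^ Suc j" for j
  proof (induction j)
    case 0
    then show ?case using assms(1) by simp
  next
    case (Suc j)
    have absorb: "(n choose Suc (Suc j)) * Suc (Suc j) = (n choose Suc j) * (n - Suc j)"
      using binomial_absorption[of "Suc j" n] binomial_absorb_comp[of n "Suc j"]
      by (simp add: mult.commute)
    show ?case
    proof (cases "n \<le> Suc j")
      case True
      then show ?thesis using assms(1) by (simp add: binomial_eq_0)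
    next
      case False
      have "n - Suc j \<le> Suc (Suc j) * M"
        using assms(1) mult_le_mono1[of 2 "Suc (Suc j)" M] by linarith
      then have "(n choose Suc (Suc j)) * Suc (Suc j) < 2 * M ^ Suc j * (Suc (Suc j) * M)"
        unfolding absorb using Suc.IH False by (intro mult_less_le_imp_less) auto
      also have "\<dots> = 2 * M ^ Suc (Suc j) * Suc (Suc j)"
        by (simp add: algebra_simps)
      finally show ?thesis by (simp only: mult_less_cancel2)
    qed
  qed
  then show ?thesis using assms(2) by (cases m) simp_all
qed

lemma R_gsim_gt_multiplexing_iff:
  fixes nt nrf k :: nat
  assumes "nrf \<le> nt"
  shows "R_gsim nt (2 ^ k) nrf > real nt * k \<longleftrightarrow> 2 * (2 ^ k) ^ (nt - nrf) \<le> nt choose nrf"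
proof -
  have split: "real nt * k = real ((nt - nrf) * k) + real nrf * k"
    using assms by (simp add: of_nat_diff algebra_simps)
  have "R_gsim nt (2 ^ k) nrf > real nt * k
      \<longleftrightarrow> int ((nt - nrf) * k) < \<lfloor>log 2 (real (nt choose nrf))\<rfloor>"
    unfolding R_gsim_def split by (simp del: of_nat_mult; metis add_less_cancel_right of_int_less_iff of_int_of_nat_eq)
  also have "\<dots> \<longleftrightarrow> 2 ^ Suc ((nt - nrf) * k) \<le> real (nt choose nrf)"
    using assms by (intro less_floor_log_iff) simp_all
  also have "(2::real) ^ Suc ((nt - nrf) * k) = real (2 * (2 ^ k) ^ (nt - nrf))"
    by (simp add: power_mult mult.commute)
  finally show ?thesis by (simp only: of_nat_le_iff)
qed

lemma exists_binomial_ge_double_power_iff: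
  fixes nt M :: nat
  assumes "1 \<le> M"
  shows "(\<exists>nrf\<in>{1..nt}. 2 * M ^ (nt - nrf) \<le> nt choose nrf) \<longleftrightarrow> 2 * M \<le> nt"
proof
  assume "\<exists>nrf\<in>{1..nt}. 2 * M ^ (nt - nrf) \<le> nt choose nrf"
  then obtain nrf where nrf: "nrf \<in> {1..nt}" "2 * M ^ (nt - nrf) \<le> nt choose nrf" by blast
  show "2 * M \<le> nt"
  proof (rule ccontr)
    assume "\<not> 2 * M \<le> nt"
    moreover have "nt choose nrf = nt choose (nt - nrf)"
      using nrf(1) by (intro binomial_symmetric) simp
    ultimately show False
      using nrf binomial_less_double_power[of nt M "nt - nrf"]
      by (cases "nt = nrf") auto
  qed
next
  assume "2 * M \<le> nt"
  moreover have "nt choose (nt - 1) = nt"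
    using binomial_symmetric[of 1 nt] \<open>2 * M \<le> nt\<close> assms by simp
  ultimately have "nt - 1 \<in> {1..nt}" "2 * M ^ (nt - (nt - 1)) \<le> nt choose (nt - 1)"
    using assms by auto
  then show "\<exists>nrf\<in>{1..nt}. 2 * M ^ (nt - nrf) \<le> nt choose nrf" by blast
qed

theorem theorem1:
  fixes nt M :: nat
  assumes "nt \<ge> 1" and "M \<ge> 2"
    and "\<exists>k::nat. k > 0 \<and> log 2 (real M) = real k"
  shows "R_gsim_max nt M > real nt * log 2 (real M) \<longleftrightarrow> nt \<ge> 2 * M"
proof -
  obtain k :: nat where k: "log 2 (real M) = real k" using assms(3) by blast
  have "real M = 2 ^ k"
    using assms(2) k powr_log_cancel[of 2 "real M"] by (simp add: powr_realpow)
  then have M: "M = 2 ^ k" by (metis of_nat_numeral of_nat_power of_nat_eq_iff)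
  have "R_gsim_max nt M > real nt * k \<longleftrightarrow> (\<exists>nrf\<in>{1..nt}. R_gsim nt M nrf > real nt * k)"
    unfolding R_gsim_max_def using assms(1) by (subst Max_gr_iff) auto
  also have "\<dots> \<longleftrightarrow> (\<exists>nrf\<in>{1..nt}. 2 * M ^ (nt - nrf) \<le> nt choose nrf)"
    unfolding M by (intro bex_cong refl R_gsim_gt_multiplexing_iff) simp
  also have "\<dots> \<longleftrightarrow> 2 * M \<le> nt"
    using assms(2) by (intro exists_binomial_ge_double_power_iff) simp
  finally show ?thesis unfolding k .
qed

end
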